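(* Let $n\ge2$, $1\le k\le n-1$, $r\ge1$. Let $h$ be continuous on $[l_F,r_F]$ with $h^{(k+r-1)}$ continuous on $(l_F,r_F)$. If $l_F>-\infty$, $r_F=\infty$ and $F(x)=1-e^{-c(x-l_F)}$ for $x\ge l_F$ with some $c>0$, then \[ E[h^{(k+r-1)}(X(n))\mid X(n-k)=u,\ X(n+r)=v]=\frac{(k+r-1)!}{(k-1)!(r-1)!}\,{}_{r-1}M_{k-1}(u,v)\qquad (l_F<u<v<r_F). \]
   Context: $X_1,X_2,\dots$ are i.i.d. copies of a random variable $X$ with distribution function $F$; $l_F=\inf\{x:F(x)>0\}$, $r_F=\sup\{x:F(x)<1\}$. Upper record times: $L(1)=1$, $L(m)=\min\{j>L(m-1): X_j>X_{L(m-1)}\}$; upper record values $X(m)=X_{L(m)}$. With $R(x)=-\ln(1-F(x))$, conditional expectations given $X(n-k)=u$, $X(n+r)=v$ are taken with respect to the conditional density $\frac{(k+r-1)!}{(k-1)!(r-1)!}[\frac{R(t)-R(u)}{R(v)-R(u)}]^{k-1}[\frac{R(v)-R(t)}{R(v)-R(u)}]^{r-1}\frac{R'(t)}{R(v)-R(u)}$, $u<t<v$. For a function $h$, $M(u,v)=\frac{h(v)-h(u)}{v-u}$ ($u\ne v$) and ${}_iM_j(u,v)=\frac{\partial^{i+j}}{\partial u^i\partial v^j}M(u,v)$. *)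

theory Defs
  imports "HOL-Analysis.Analysis"
begin

definition hazR :: "(real \<Rightarrow> real) \<Rightarrow> real \<Rightarrow> real" where
  "hazR F x = - ln (1 - F x)"

text \<open>Conditional density of X(n) given X(n-k)=u, X(n+r)=v, at point t (u<t<v).\<close>
definition cond_dens :: "(real \<Rightarrow> real) \<Rightarrow> nat \<Rightarrow> nat \<Rightarrow> real \<Rightarrow> real \<Rightarrow> real \<Rightarrow> real" where
  "cond_dens F k r u v t =
     fact (k + r - 1) / (fact (k - 1) * fact (r - 1))
     * ((hazR F t - hazR F u) / (hazR F v - hazR F u)) ^ (k - 1)
     * ((hazR F v - hazR F t) / (hazR F v - hazR F u)) ^ (r - 1)
     * deriv (hazR F) t / (hazR F v - hazR F u)"

definition cond_exp :: "(real \<Rightarrow> real) \<Rightarrow> nat \<Rightarrow> nat \<Rightarrow> (real \<Rightarrow> real) \<Rightarrow> real \<Rightarrow> real \<Rightarrow> real" where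
  "cond_exp F k r g u v = integral {u<..<v} (\<lambda>t. g t * cond_dens F k r u v t)"

definition Mh :: "(real \<Rightarrow> real) \<Rightarrow> real \<Rightarrow> real \<Rightarrow> real" where
  "Mh h u v = (h v - h u) / (v - u)"

text \<open>iMj(u,v) = d^(i+j) M / du^i dv^j (v-derivatives taken first, then u).\<close>
definition Mij :: "(real \<Rightarrow> real) \<Rightarrow> nat \<Rightarrow> nat \<Rightarrow> real \<Rightarrow> real \<Rightarrow> real" where
  "Mij h i j u v = (deriv ^^ i) (\<lambda>u'. (deriv ^^ j) (\<lambda>v'. Mh h u' v') v) u"

end

theory Submission
  imports Defs
begin

text \<open>
  For the exponential law F(x) = 1 - exp(-c(x - l)) the cumulative hazard R(x) = c(x - l) is
  affine, so the conditional density of X(n) given X(n-k) = u, X(n+r) = v is the Beta(k, r)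
  density transported to [u, v].  Substituting t = (1-s)u + sv, the conditional expectation of
  h^(k+r-1)(X(n)) becomes the constant (k+r-1)!/((k-1)!(r-1)!) times the "beta average"
    B(i, j; u, v) = integral over s in [0, 1] of h^(i+j+1)((1-s)u + sv) s^j (1-s)^i
  with i = r-1, j = k-1.  On the other side M(u, v) = B(0, 0; u, v) by the fundamental theorem
  of calculus, and differentiating under the integral sign shows that d/dv raises j by one and
  d/du raises i by one, so the mixed partial iMj(u, v) equals B(i, j; u, v).
\<close>

lemma convex_comb_gt:
  fixes l a b s :: real
  assumes "l < a" "l < b" "0 \<le> s" "s \<le> 1"
  shows "l < (1 - s) * a + s * b"
proof -
  have "(1 - s) * l \<le> (1 - s) * a" "s * l \<le> s * b"
    using assms by (auto intro: mult_left_mono)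
  moreover have "(1 - s) * l < (1 - s) * a \<or> s * l < s * b"
    using assms by (cases "s = 1") (auto intro!: mult_strict_left_mono)
  ultimately show ?thesis by (auto simp: algebra_simps)
qed

lemma has_real_derivative_affine_param_integral:
  fixes f f' w \<alpha> \<beta> :: "real \<Rightarrow> real" and l x0 :: real
  assumes f_der: "\<And>y. l < y \<Longrightarrow> (f has_real_derivative f' y) (at y)"
    and f'_cont: "continuous_on {l<..} f'"
    and coeff_cont: "continuous_on {0..1} w" "continuous_on {0..1} \<alpha>" "continuous_on {0..1} \<beta>"
    and inside: "\<And>x s. l < x \<Longrightarrow> s \<in> {0..1} \<Longrightarrow> l < \<alpha> s + \<beta> s * x"
    and x0: "l < x0"
  shows "((\<lambda>x. integral {0..1} (\<lambda>s. f (\<alpha> s + \<beta> s * x) * w s)) has_real_derivative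
           integral {0..1} (\<lambda>s. f' (\<alpha> s + \<beta> s * x0) * \<beta> s * w s)) (at x0)"
proof -
  have f_cont: "continuous_on {l<..} f"
    by (intro continuous_at_imp_continuous_on ballI DERIV_isCont[OF f_der]) auto
  have "((\<lambda>x. integral (cbox 0 1) (\<lambda>s. f (\<alpha> s + \<beta> s * x) * w s)) has_field_derivative
           integral (cbox 0 1) (\<lambda>s. f' (\<alpha> s + \<beta> s * x0) * \<beta> s * w s)) (at x0 within {l<..})"
  proof (rule leibniz_rule_field_derivative[where fx = "\<lambda>x s. f' (\<alpha> s + \<beta> s * x) * \<beta> s * w s"])
    fix x s :: real assume x: "x \<in> {l<..}" and s: "s \<in> cbox 0 1"
    have "((\<lambda>x. f (\<alpha> s + \<beta> s * x)) has_real_derivative f' (\<alpha> s + \<beta> s * x) * \<beta> s) (at x)"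
      by (rule DERIV_chain2[OF f_der]) (use inside x s in \<open>auto intro!: derivative_eq_intros\<close>)
    then show "((\<lambda>x. f (\<alpha> s + \<beta> s * x) * w s) has_field_derivative
                 f' (\<alpha> s + \<beta> s * x) * \<beta> s * w s) (at x within {l<..})"
      by (auto intro: has_field_derivative_at_within DERIV_cmult_right)
  next
    fix x :: real assume x: "x \<in> {l<..}"
    have "continuous_on {0..1} (\<lambda>s. f (\<alpha> s + \<beta> s * x) * w s)"
      by (intro continuous_intros continuous_on_compose2[OF f_cont] coeff_cont)
         (use inside x in auto)
    then show "(\<lambda>s. f (\<alpha> s + \<beta> s * x) * w s) integrable_on cbox 0 1"
      by (simp add: integrable_continuous_interval)
  next
    have "continuous_on ({l<..} \<times> {0..1}) (\<lambda>p. f' (\<alpha> (snd p) + \<beta> (snd p) * fst p))"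
      by (rule continuous_on_compose2[OF f'_cont])
         (auto intro!: continuous_intros continuous_on_compose2[OF coeff_cont(2)]
            continuous_on_compose2[OF coeff_cont(3)] inside simp: mem_Times_iff)
    moreover have "continuous_on ({l<..} \<times> {0..1}) (\<lambda>p. \<beta> (snd p) * w (snd p))"
      by (intro continuous_intros continuous_on_compose2[OF coeff_cont(3)]
            continuous_on_compose2[OF coeff_cont(1)]) auto
    ultimately show "continuous_on ({l<..} \<times> cbox 0 1) (\<lambda>(x, s). f' (\<alpha> s + \<beta> s * x) * \<beta> s * w s)"
      unfolding split_beta by (simp add: continuous_on_mult mult.assoc)
  qed (use x0 in auto)
  then show ?thesis
    by (simp add: at_within_open[of x0 "{l<..}"] x0)
qed

lemma iterated_deriv_eq_chain:
  fixes f :: "real \<Rightarrow> real" and G :: "nat \<Rightarrow> real \<Rightarrow> real" and S :: "real set"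
  assumes "open S"
    and base: "\<And>x. x \<in> S \<Longrightarrow> f x = G 0 x"
    and step: "\<And>j x. j < n \<Longrightarrow> x \<in> S \<Longrightarrow> (G j has_real_derivative G (Suc j) x) (at x)"
    and "j \<le> n" "x \<in> S"
  shows "(deriv ^^ j) f x = G j x"
  using assms(4,5)
proof (induction j arbitrary: x)
  case 0
  then show ?case using base by simp
next
  case (Suc j)
  have "((deriv ^^ j) f has_real_derivative G (Suc j) x) (at x)"
  proof (rule has_field_derivative_transform_within_open[OF step \<open>open S\<close>])
    show "G j y = (deriv ^^ j) f y" if "y \<in> S" for y
      using Suc.IH[of y] Suc.prems that by simp
  qed (use Suc.prems in auto)
  then show ?case by (simp add: DERIV_imp_deriv)
qed

definition beta_avg :: "(nat \<Rightarrow> real \<Rightarrow> real) \<Rightarrow> nat \<Rightarrow> nat \<Rightarrow> real \<Rightarrow> real \<Rightarrow> real" where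
  "beta_avg g a b u v = integral {0..1} (\<lambda>s. g (a + b + 1) ((1 - s) * u + s * v) * s ^ b * (1 - s) ^ a)"

locale deriv_chain =
  fixes g :: "nat \<Rightarrow> real \<Rightarrow> real" and N :: nat and l :: real
  assumes chain: "\<And>m x. m < N \<Longrightarrow> l < x \<Longrightarrow> (g m has_real_derivative g (Suc m) x) (at x)"
    and top_cont: "continuous_on {l<..} (g N)"
begin

lemma cont: "m \<le> N \<Longrightarrow> continuous_on {l<..} (g m)"
  using top_cont
  by (cases "m = N")
     (auto intro!: continuous_at_imp_continuous_on DERIV_isCont[OF chain])

lemma beta_avg_deriv_right:
  assumes "a + b + 1 < N" "l < u" "l < v"
  shows "((\<lambda>x. beta_avg g a b u x) has_real_derivative beta_avg g a (Suc b) u v) (at v)"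
proof -
  have "((\<lambda>x. integral {0..1} (\<lambda>s. g (a + b + 1) ((1 - s) * u + s * x) * (s ^ b * (1 - s) ^ a)))
          has_real_derivative
          integral {0..1} (\<lambda>s. g (Suc (a + b + 1)) ((1 - s) * u + s * v) * s * (s ^ b * (1 - s) ^ a))) (at v)"
    by (rule has_real_derivative_affine_param_integral[OF chain cont])
       (use assms in \<open>auto intro!: continuous_intros convex_comb_gt\<close>)
  then show ?thesis
    by (simp add: beta_avg_def mult_ac)
qed

lemma beta_avg_deriv_left:
  assumes "a + b + 1 < N" "l < u" "l < v"
  shows "((\<lambda>x. beta_avg g a b x v) has_real_derivative beta_avg g (Suc a) b u v) (at u)"
proof -
  have "((\<lambda>x. integral {0..1} (\<lambda>s. g (a + b + 1) (s * v + (1 - s) * x) * (s ^ b * (1 - s) ^ a)))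
          has_real_derivative
          integral {0..1} (\<lambda>s. g (Suc (a + b + 1)) (s * v + (1 - s) * u) * (1 - s) * (s ^ b * (1 - s) ^ a))) (at u)"
    by (rule has_real_derivative_affine_param_integral[OF chain cont])
       (use assms convex_comb_gt in \<open>auto intro!: continuous_intros simp: add.commute\<close>)
  then show ?thesis
    by (simp add: beta_avg_def mult_ac add.commute)
qed

text \<open>The difference quotient is the average of h' over the segment (fundamental theorem
  of calculus).\<close>
lemma Mh_eq_beta_avg:
  assumes "g 0 = h" "0 < N" "l < u" "l < v" "u \<noteq> v"
  shows "Mh h u v = beta_avg g 0 0 u v"
proof -
  have "((\<lambda>s. (v - u) * g 1 ((1 - s) * u + s * v)) has_integral
          h ((1 - 1) * u + 1 * v) - h ((1 - 0) * u + 0 * v)) {0..1}"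
  proof (rule fundamental_theorem_of_calculus)
    fix s :: real assume "s \<in> {0..1}"
    then have "((\<lambda>s. h ((1 - s) * u + s * v)) has_real_derivative g 1 ((1 - s) * u + s * v) * (v - u)) (at s)"
      using assms convex_comb_gt[of l u v s]
      by (intro DERIV_chain2[where f = h]) (auto intro!: derivative_eq_intros chain)
    then show "((\<lambda>s. h ((1 - s) * u + s * v)) has_vector_derivative (v - u) * g 1 ((1 - s) * u + s * v))
                 (at s within {0..1})"
      by (simp add: has_real_derivative_iff_has_vector_derivative has_vector_derivative_at_within mult.commute)
  qed simp
  from has_integral_divide[OF this, of "v - u"]
  have "((\<lambda>s. g 1 ((1 - s) * u + s * v)) has_integral (h v - h u) / (v - u)) {0..1}"
    using assms(5) by simp
  then show ?thesis
    by (simp add: Mh_def beta_avg_def integral_unique)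
qed

lemma Mij_eq_beta_avg:
  assumes "g 0 = h" "i + j + 1 \<le> N" "l < u" "l < v" "u \<noteq> v"
  shows "Mij h i j u v = beta_avg g i j u v"
proof -
  have inner: "(deriv ^^ j) (\<lambda>v'. Mh h u' v') v' = beta_avg g 0 j u' v'"
    if "l < u'" "v' \<in> {l<..} - {u'}" for u' v'
  proof (rule iterated_deriv_eq_chain[where S = "{l<..} - {u'}" and n = j])
    show "Mh h u' x = beta_avg g 0 0 u' x" if "x \<in> {l<..} - {u'}" for x
      using Mh_eq_beta_avg[OF assms(1)] assms(2) \<open>l < u'\<close> that by auto
    show "(beta_avg g 0 j' u' has_real_derivative beta_avg g 0 (Suc j') u' x) (at x)"
      if "j' < j" "x \<in> {l<..} - {u'}" for j' x
      using beta_avg_deriv_right[of 0 j' u' x] assms(2) \<open>l < u'\<close> that by auto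
  qed (use that in \<open>auto intro: open_Diff\<close>)
  show ?thesis
    unfolding Mij_def
  proof (rule iterated_deriv_eq_chain[where S = "{l<..} - {v}" and n = i])
    show "(deriv ^^ j) (Mh h x) v = beta_avg g 0 j x v" if "x \<in> {l<..} - {v}" for x
      using inner[of x v] assms(4) that by auto
    show "((\<lambda>x. beta_avg g i' j x v) has_real_derivative beta_avg g (Suc i') j x v) (at x)"
      if "i' < i" "x \<in> {l<..} - {v}" for i' x
      using beta_avg_deriv_left[of i' j x v] assms(2,4) that by auto
  qed (use assms in auto)
qed

end

lemma hazR_exponential:
  assumes F_def: "\<And>x. F x = (if x < l then 0 else 1 - exp (- c * (x - l)))" and "l \<le> x"
  shows "hazR F x = c * (x - l)"
  using assms by (simp add: hazR_def)

lemma deriv_hazR_exponential: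
  assumes F_def: "\<And>x. F x = (if x < l then 0 else 1 - exp (- c * (x - l)))" and "l < x"
  shows "deriv (hazR F) x = c"
proof -
  have "((\<lambda>y. c * (y - l)) has_real_derivative c) (at x)"
    by (auto intro!: derivative_eq_intros)
  then have "(hazR F has_real_derivative c) (at x)"
    by (rule has_field_derivative_transform_within_open[where S = "{l<..}"])
       (use \<open>l < x\<close> hazR_exponential[OF F_def] in auto)
  then show ?thesis by (rule DERIV_imp_deriv)
qed

lemma cond_dens_exponential:
  assumes F_def: "\<And>x. F x = (if x < l then 0 else 1 - exp (- c * (x - l)))"
    and "c \<noteq> 0" "l \<le> u" "u < t" "t < v"
  shows "cond_dens F k r u v t
           = fact (k + r - 1) / (fact (k - 1) * fact (r - 1))
             * (((t - u) / (v - u)) ^ (k - 1) * ((v - t) / (v - u)) ^ (r - 1) / (v - u))"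
proof -
  have haz: "hazR F x = c * (x - l)" if "x \<in> {u, t, v}" for x
    using hazR_exponential[OF F_def, of x] \<open>l \<le> u\<close> \<open>u < t\<close> \<open>t < v\<close> that by auto
  have rescale: "(hazR F x - hazR F y) / (hazR F v - hazR F u) = (x - y) / (v - u)"
    if "x \<in> {u, t, v}" "y \<in> {u, t, v}" for x y
    using \<open>c \<noteq> 0\<close> by (simp add: haz[OF that(1)] haz[OF that(2)] haz right_diff_distrib[symmetric])
  have density: "deriv (hazR F) t / (hazR F v - hazR F u) = 1 / (v - u)"
    using \<open>c \<noteq> 0\<close> assms(3,4)
    by (simp add: haz deriv_hazR_exponential[OF F_def] right_diff_distrib[symmetric])
  have "(hazR F t - hazR F u) / (hazR F v - hazR F u) = (t - u) / (v - u)"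
       "(hazR F v - hazR F t) / (hazR F v - hazR F u) = (v - t) / (v - u)"
    by (simp_all add: rescale)
  then show ?thesis
    unfolding cond_dens_def times_divide_eq_right[symmetric] density
    by (simp add: divide_inverse)
qed

lemma integral_beta_substitution:
  fixes f :: "real \<Rightarrow> real" and u v :: real and a b :: nat
  assumes "continuous_on {u..v} f" "u < v"
  shows "integral {u<..<v} (\<lambda>t. f t * (((t - u) / (v - u)) ^ a * ((v - t) / (v - u)) ^ b / (v - u)))
           = integral {0..1} (\<lambda>s. f ((1 - s) * u + s * v) * s ^ a * (1 - s) ^ b)"
proof -
  define \<phi> where "\<phi> t = f t * (((t - u) / (v - u)) ^ a * ((v - t) / (v - u)) ^ b / (v - u))" for t
  have \<phi>_cont: "continuous_on {u..v} \<phi>"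
    unfolding \<phi>_def by (intro continuous_intros assms) (use assms in auto)
  have "((\<lambda>s. (v - u) *\<^sub>R \<phi> (u + s * (v - u))) has_integral integral {u + 0 * (v - u)..u + 1 * (v - u)} \<phi>) {0..1}"
  proof (rule has_integral_substitution[where c = u and d = v])
    have "0 \<le> s * (v - u) \<and> s * (v - u) \<le> v - u" if "s \<in> {0..1}" for s
      using that assms(2) mult_left_le_one_le[of "v - u" s] by auto
    then show "(\<lambda>s. u + s * (v - u)) ` {0..1} \<subseteq> {u..v}" by fastforce
  qed (use assms(2) \<phi>_cont in \<open>auto intro!: derivative_eq_intros\<close>)
  moreover have "(v - u) *\<^sub>R \<phi> (u + s * (v - u)) = f ((1 - s) * u + s * v) * s ^ a * (1 - s) ^ b" for s
  proof -
    have "(u + s * (v - u) - u) / (v - u) = s" "(v - (u + s * (v - u))) / (v - u) = 1 - s"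
      using assms(2) by (simp_all add: field_simps)
    moreover have "u + s * (v - u) = (1 - s) * u + s * v" by (simp add: algebra_simps)
    ultimately show ?thesis using assms(2) by (simp add: \<phi>_def)
  qed
  ultimately have "((\<lambda>s. f ((1 - s) * u + s * v) * s ^ a * (1 - s) ^ b) has_integral integral {u<..<v} \<phi>) {0..1}"
    by (simp add: integral_open_interval_real)
  then have "integral {u<..<v} \<phi> = integral {0..1} (\<lambda>s. f ((1 - s) * u + s * v) * s ^ a * (1 - s) ^ b)"
    by (rule integral_unique[symmetric])
  then show ?thesis
    unfolding \<phi>_def .
qed

lemma deriv_chain_iterated_deriv:
  fixes h :: "real \<Rightarrow> real"
  assumes "\<And>j x. j < N \<Longrightarrow> l < x \<Longrightarrow> (deriv ^^ j) h differentiable (at x)"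
    and "continuous_on {l<..} ((deriv ^^ N) h)"
  shows "deriv_chain (\<lambda>m. (deriv ^^ m) h) N l"
  using assms by unfold_locales (simp_all add: DERIV_deriv_iff_real_differentiable)

theorem lemma2:
  fixes F h :: "real \<Rightarrow> real" and n k r :: nat and l c :: real
  assumes "n \<ge> 2" and "1 \<le> k" and "k \<le> n - 1" and "r \<ge> 1"
    and "c > 0"
    and F_def: "\<And>x. F x = (if x < l then 0 else 1 - exp (- c * (x - l)))"
    and h_cont: "continuous_on {l..} h"
    and h_diff: "\<And>j x. j < k + r - 1 \<Longrightarrow> l < x \<Longrightarrow> (deriv ^^ j) h differentiable (at x)"
    and h_cont_deriv: "continuous_on {l<..} ((deriv ^^ (k + r - 1)) h)"
  shows "\<And>u v. l < u \<Longrightarrow> u < v \<Longrightarrow>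
    cond_exp F k r ((deriv ^^ (k + r - 1)) h) u v
      = fact (k + r - 1) / (fact (k - 1) * fact (r - 1)) * Mij h (r - 1) (k - 1) u v"
proof -
  fix u v :: real assume lu: "l < u" and uv: "u < v"
  define N where "N = k + r - 1"
  define g where "g m = (deriv ^^ m) h" for m
  define C :: real where "C = fact (k + r - 1) / (fact (k - 1) * fact (r - 1))"
  interpret deriv_chain g N l
    unfolding g_def N_def by (rule deriv_chain_iterated_deriv[OF h_diff h_cont_deriv])
  have N_split: "N = (r - 1) + (k - 1) + 1"
    using \<open>1 \<le> k\<close> \<open>r \<ge> 1\<close> by (simp add: N_def)
  have "cond_exp F k r (g N) u v
      = integral {u<..<v} (\<lambda>t. C * (g N t * (((t - u) / (v - u)) ^ (k - 1) * ((v - t) / (v - u)) ^ (r - 1) / (v - u))))"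
    unfolding cond_exp_def C_def using cond_dens_exponential[OF F_def] \<open>c > 0\<close> lu
    by (intro integral_cong) auto
  also have "\<dots> = C * integral {u<..<v} (\<lambda>t. g N t * (((t - u) / (v - u)) ^ (k - 1) * ((v - t) / (v - u)) ^ (r - 1) / (v - u)))"
    by simp
  also have "\<dots> = C * beta_avg g (r - 1) (k - 1) u v"
    using lu unfolding beta_avg_def N_split[symmetric]
    by (subst integral_beta_substitution[OF continuous_on_subset[OF cont[of N]] uv]) auto
  also have "\<dots> = C * Mij h (r - 1) (k - 1) u v"
    using Mij_eq_beta_avg[of h "r - 1" "k - 1" u v] N_split lu uv by (simp add: g_def)
  finally show "cond_exp F k r ((deriv ^^ (k + r - 1)) h) u v = C * Mij h (r - 1) (k - 1) u v"
    by (simp add: g_def N_def)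
qed

end
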